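(* Let $u = \mathbf{1}_{[-\alpha, \alpha]}$ for some $\alpha > 0$, and for some smoothing level $\sigma > 0$ consider the associated curl field \begin{equation*} \mathcal{C}(\mathbf{x}) = \left\langle \nabla_{\mathbf{x}}[\varphi_{\sigma^2} \ast u u^{\top} ](\mathbf{x}), \begin{bmatrix} 0 & -1 \\ 1 & 0 \end{bmatrix} \mathbf{x} \right\rangle_{\ell^2}. \end{equation*} Writing $\mathbf{x} = (s, t)$, and defining \begin{equation*} f(s) = \int_{-\alpha}^{\alpha} \varphi_{\sigma^2}(s - x) \, dx, \end{equation*} we have the explicit expression \begin{equation*} \nabla_{\mathbf{x}} \mathcal{C}(\mathbf{x}) = \begin{bmatrix} s f'(s) f'(t) + f(s) f'(t) - t f(t) f''(s) \\ s f(s) f''(t) - f(t) f'(s) - t f'(s) f'(t) \end{bmatrix}, \end{equation*} and the `iterated curl field' satisfies the estimate \begin{equation*} \int_{\mathbb{R}^2} \left( \left\langle \nabla_{\mathbf{x}} \mathcal{C}(s, t), \begin{bmatrix} -t \\ s \end{bmatrix} \right\rangle_{\ell^2} \right)^2 \, ds \, dt \leq \frac{28 \alpha^4}{\pi \sigma^2} + \frac{3\alpha^6(20\sigma^2 + 4\alpha^2)}{10\pi \sigma^6 }, \end{equation*} and if $\alpha^2 \leq 1$, it also satisfies the estimate \begin{equation*} \int_{\mathbb{R}^2} \left( \left\langle \nabla_{\mathbf{x}} \mathcal{C}(s, t), \begin{bmatrix} -t \\ s \end{bmatrix} \right\rangle_{\ell^2} \right)^2 \, ds \, dt \leq \frac{3}{\pi}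 + \frac{55}{\pi \sigma^2} + \frac{4}{5 \pi \sigma^4}. \end{equation*}
   Context: For $\sigma^2 > 0$, $\varphi_{\sigma^2}(t) = \frac{1}{\sqrt{2\pi\sigma^2}} \exp(-\tfrac{1}{2 \sigma^2}t^2)$ denotes the one-dimensional gaussian, and the same symbol is used for the two-dimensional gaussian $\varphi_{\sigma^2}(s,t) = \varphi_{\sigma^2}(s)\varphi_{\sigma^2}(t)$, with the meaning clear from the dimensionality of the argument. $\mathbf{1}_{A}$ is the indicator function of a set $A$. For $u \in L^2(\mathbb{R})$, $uu^{\top}$ denotes the function $(s,t) \mapsto u(s)u(t)$ on $\mathbb{R}^2$. $\ast$ denotes convolution, $(f \ast g)(\mathbf{x}) = \int f(\mathbf{x}') g(\mathbf{x}-\mathbf{x}') \, d\mathbf{x}'$, and $\langle \cdot,\cdot\rangle_{\ell^2}$ is the euclidean inner product on $\mathbb{R}^2$. *)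

theory Defs
  imports "HOL-Analysis.Analysis"
begin

definition gauss :: "real \<Rightarrow> real \<Rightarrow> real" where
  "gauss v t = 1 / sqrt (2 * pi * v) * exp (- (t ^ 2) / (2 * v))"

definition gauss2 :: "real \<Rightarrow> real \<times> real \<Rightarrow> real" where
  "gauss2 v x = gauss v (fst x) * gauss v (snd x)"

definition outer :: "(real \<Rightarrow> real) \<Rightarrow> real \<times> real \<Rightarrow> real" where
  "outer u x = u (fst x) * u (snd x)"

definition conv2 :: "(real \<times> real \<Rightarrow> real) \<Rightarrow> (real \<times> real \<Rightarrow> real) \<Rightarrow> real \<times> real \<Rightarrow> real" where
  "conv2 f g x = (\<integral>y. f y * g (x - y) \<partial>lborel)"

definition grad :: "(real \<times> real \<Rightarrow> real) \<Rightarrow> real \<times> real \<Rightarrow> real \<times> real" where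
  "grad F x = (THE v. (F has_derivative (\<lambda>h. v \<bullet> h)) (at x))"

definition rot :: "real \<times> real \<Rightarrow> real \<times> real" where
  "rot x = (- snd x, fst x)"

definition curl_field :: "real \<Rightarrow> (real \<Rightarrow> real) \<Rightarrow> real \<times> real \<Rightarrow> real" where
  "curl_field v u x = grad (conv2 (gauss2 v) (outer u)) x \<bullet> rot x"

end

theory Submission
  imports Defs "HOL-Probability.Distributions" "HOL-Real_Asymp.Real_Asymp"
begin

(*
  Convolving u u^T with the separable two-dimensional Gaussian gives f(s) f(t), so the curl
  field is C(s,t) = s f(s) f'(t) - t f'(s) f(t), and the iterated curl field
  <grad C(s,t), (-t,s)> is a separable bilinear form sum_kl c_kl gamma_k(s) gamma_l(t) in the
  four functions gamma = (s f', f, f'', s^2 f).  Its squared L^2 norm is therefore a quartic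
  expression in the Gram matrix of the gamma_k, and integration by parts (the boundary terms
  vanish by Gaussian decay) expresses every Gram entry through the moments M_k = int s^k f^2,
  R = int f'^2, P = int s^2 f'^2 and S = int f''^2; the result is
  6 P^2 - 6 M_0 P + 5/2 M_0^2 + 2 S M_4 - 10 R M_2.

  After dropping the two negative terms it remains to bound P, S, M_0 and M_4.  Since f' and
  f'' are built from shifted Gaussians, whose pairwise products are Gaussians of half the
  variance, P and S are computed exactly from Gaussian moments.  For M_0 and M_4,
  Cauchy-Schwarz on [-alpha, alpha] gives f(s)^2 <= 2 alpha int_{-alpha}^{alpha} phi(s - x)^2 dx,
  and Tonelli reduces the bound to Gaussian moments again.
*)

section \<open>Gaussians\<close>

lemma mult_exp_neg_le_half:
  fixes x :: real
  assumes "0 \<le> x"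
  shows "x * exp (- x) \<le> 1 / 2"
proof -
  have "2 * x \<le> 1 + x + x\<^sup>2 / 2"
    using sum_squares_ge_zero[of "x - 1" 0] by (simp add: power2_eq_square algebra_simps)
  also have "\<dots> \<le> exp x"
    by (rule exp_lower_Taylor_quadratic[OF assms])
  finally show ?thesis
    by (simp add: exp_minus field_simps)
qed

lemma gauss_pos: "0 < v \<Longrightarrow> 0 < gauss v z"
  by (simp add: gauss_def)

lemma gauss_shift_eq_normal_density: "0 < w \<Longrightarrow> gauss w (s - \<mu>) = normal_density \<mu> (sqrt w) s"
  by (simp add: gauss_def normal_density_def)

lemma gauss_measurable [measurable]: "gauss v \<in> borel_measurable borel"
  unfolding gauss_def[abs_def] by measurable

lemma continuous_on_gauss [continuous_intros]:
  "continuous_on A g \<Longrightarrow> 0 < v \<Longrightarrow> continuous_on A (\<lambda>x. gauss v (g x))"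
  unfolding gauss_def by (intro continuous_intros) auto

lemma isCont_gauss: "0 < v \<Longrightarrow> isCont (gauss v) z"
  unfolding gauss_def by (intro continuous_intros) auto

lemma has_real_derivative_gauss:
  "0 < v \<Longrightarrow> (gauss v has_real_derivative - (z / v) * gauss v z) (at z)"
  unfolding gauss_def
  by (auto intro!: derivative_eq_intros simp: field_simps power2_eq_square)

lemma gauss_antiderivative_exists:
  assumes "0 < v"
  obtains G where "\<And>x. (G has_real_derivative gauss v x) (at x)"
  using einterval_antiderivative[of "-\<infinity>" "\<infinity>" "gauss v"] isCont_gauss[OF assms] that
  by (auto simp: has_real_derivative_iff_has_vector_derivative)

lemma gauss_mono_abs: "0 < v \<Longrightarrow> \<bar>y\<bar> \<le> \<bar>z\<bar> \<Longrightarrow> gauss v z \<le> gauss v y"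
  unfolding gauss_def by (auto simp: abs_le_square_iff divide_right_mono intro!: mult_left_mono)

lemma tendsto_power_mult_gauss:
  assumes "0 < v"
  shows "((\<lambda>s. s ^ k * gauss v (s - c)) \<longlongrightarrow> 0) at_infinity"
proof -
  have "((\<lambda>s. s ^ k * gauss v (s - c)) \<longlongrightarrow> 0) at_top"
    "((\<lambda>s. s ^ k * gauss v (s - c)) \<longlongrightarrow> 0) at_bot"
    unfolding gauss_def using assms by real_asymp+
  then show ?thesis
    unfolding at_infinity_eq_at_top_bot by (rule filterlim_sup)
qed

definition gauss_sq_integral :: "real \<Rightarrow> real" where
  "gauss_sq_integral v = 1 / (2 * sqrt (pi * v))"

lemma gauss_sq_integral_pos: "0 < v \<Longrightarrow> 0 < gauss_sq_integral v"
  by (simp add: gauss_sq_integral_def)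

lemma gauss_sq_integral_sq: "0 < v \<Longrightarrow> (gauss_sq_integral v)\<^sup>2 = 1 / (4 * pi * v)"
  by (simp add: gauss_sq_integral_def power_divide power_mult_distrib)

lemma gauss_mult_gauss:
  assumes "0 < v"
  shows "gauss v (s - b) * gauss v (s - c) =
    exp (- ((b - c)\<^sup>2) / (4 * v)) * gauss_sq_integral v * gauss (v / 2) (s - (b + c) / 2)"
proof -
  have "sqrt (2 * pi * v) * sqrt (2 * pi * v) = 2 * sqrt (pi * v) * sqrt (pi * v)"
    using assms by (simp add: real_sqrt_mult)
  moreover have "- ((s - b)\<^sup>2) / (2 * v) + - ((s - c)\<^sup>2) / (2 * v) =
      - ((b - c)\<^sup>2) / (4 * v) + - ((s - (b + c) / 2)\<^sup>2) / (2 * (v / 2))"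
    using assms by (simp add: field_simps power2_eq_square)
  ultimately show ?thesis
    using assms unfolding gauss_def gauss_sq_integral_def
    by (simp add: exp_add[symmetric] mult_ac)
qed

lemma gauss_sq: "0 < v \<Longrightarrow> (gauss v z)\<^sup>2 = gauss_sq_integral v * gauss (v / 2) z"
  using gauss_mult_gauss[of v z 0 0] by (simp add: power2_eq_square)

lemma
  assumes "0 < w"
  shows has_bochner_integral_gauss:
      "has_bochner_integral lborel (\<lambda>s. gauss w (s - \<mu>)) 1"
    and has_bochner_integral_gauss_central_moment_2:
      "has_bochner_integral lborel (\<lambda>s. gauss w (s - \<mu>) * (s - \<mu>)\<^sup>2) w"
    and has_bochner_integral_gauss_moment_2:
      "has_bochner_integral lborel (\<lambda>s. gauss w (s - \<mu>) * s\<^sup>2) (\<mu>\<^sup>2 + w)"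
    and has_bochner_integral_gauss_moment_4:
      "has_bochner_integral lborel (\<lambda>s. gauss w (s - \<mu>) * s ^ 4) (\<mu> ^ 4 + 6 * \<mu>\<^sup>2 * w + 3 * w\<^sup>2)"
proof -
  have \<sigma>: "0 < sqrt w" using assms by simp
  let ?m = "\<lambda>k. (\<lambda>s. gauss w (s - \<mu>) * (s - \<mu>) ^ k)"
  have m0: "has_bochner_integral lborel (?m 0) 1"
    and m1: "has_bochner_integral lborel (?m 1) 0"
    and m2: "has_bochner_integral lborel (?m 2) w"
    and m3: "has_bochner_integral lborel (?m 3) 0"
    and m4: "has_bochner_integral lborel (?m 4) (3 * w\<^sup>2)"
    using normal_moment_even[OF \<sigma>, where k=0 and \<mu>=\<mu>] normal_moment_odd[OF \<sigma>, where k=0 and \<mu>=\<mu>]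
      normal_moment_even[OF \<sigma>, where k=1 and \<mu>=\<mu>] normal_moment_odd[OF \<sigma>, where k=1 and \<mu>=\<mu>]
      normal_moment_even[OF \<sigma>, where k=2 and \<mu>=\<mu>] assms
    by (simp_all add: gauss_shift_eq_normal_density fact_numeral power2_eq_square
        numeral_3_eq_3 field_simps)
  show "has_bochner_integral lborel (\<lambda>s. gauss w (s - \<mu>)) 1"
    using m0 by simp
  show "has_bochner_integral lborel (\<lambda>s. gauss w (s - \<mu>) * (s - \<mu>)\<^sup>2) w"
    using m2 .
  have "has_bochner_integral lborel (\<lambda>s. ?m 2 s + 2 * \<mu> * ?m 1 s + \<mu>\<^sup>2 * ?m 0 s)
      (w + 2 * \<mu> * 0 + \<mu>\<^sup>2 * 1)"
    by (intro has_bochner_integral_add has_bochner_integral_mult_right m0 m1 m2)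
  then show "has_bochner_integral lborel (\<lambda>s. gauss w (s - \<mu>) * s\<^sup>2) (\<mu>\<^sup>2 + w)"
    by (rule has_bochner_integral_cong[THEN iffD1, rotated -1])
       (auto simp: algebra_simps power2_eq_square)
  have "has_bochner_integral lborel (\<lambda>s. ?m 4 s + 4 * \<mu> * ?m 3 s + 6 * \<mu>\<^sup>2 * ?m 2 s
      + 4 * \<mu> ^ 3 * ?m 1 s + \<mu> ^ 4 * ?m 0 s)
      (3 * w\<^sup>2 + 4 * \<mu> * 0 + 6 * \<mu>\<^sup>2 * w + 4 * \<mu> ^ 3 * 0 + \<mu> ^ 4 * 1)"
    by (intro has_bochner_integral_add has_bochner_integral_mult_right m0 m1 m2 m3 m4)
  then show "has_bochner_integral lborel (\<lambda>s. gauss w (s - \<mu>) * s ^ 4)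
      (\<mu> ^ 4 + 6 * \<mu>\<^sup>2 * w + 3 * w\<^sup>2)"
    by (rule has_bochner_integral_cong[THEN iffD1, rotated -1])
       (auto simp: algebra_simps power2_eq_square power4_eq_xxxx numeral_3_eq_3)
qed

section \<open>Integration on the line and the plane\<close>

lemma (in pair_sigma_finite) integral_mult_fst_snd:
  fixes g :: "'a \<Rightarrow> real" and h :: "'b \<Rightarrow> real"
  assumes g: "integrable M1 g" and h: "integrable M2 h"
  shows "(\<integral>z. g (fst z) * h (snd z) \<partial>(M1 \<Otimes>\<^sub>M M2)) = integral\<^sup>L M1 g * integral\<^sup>L M2 h"
proof -
  have [measurable]: "g \<in> borel_measurable M1" "h \<in> borel_measurable M2"
    using g h by auto
  have "integrable (M1 \<Otimes>\<^sub>M M2) (\<lambda>(x, y). g x * h y)"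
    using g h by (intro Fubini_integrable) (auto simp: abs_mult)
  then have "(\<integral>z. g (fst z) * h (snd z) \<partial>(M1 \<Otimes>\<^sub>M M2)) = (\<integral>x. (\<integral>y. g x * h y \<partial>M2) \<partial>M1)"
    using integral_fst[of "\<lambda>x y. g x * h y"] by (simp add: case_prod_beta')
  then show ?thesis by simp
qed

definition square_integrable :: "'a measure \<Rightarrow> ('a \<Rightarrow> real) \<Rightarrow> bool" where
  "square_integrable M g \<longleftrightarrow> g \<in> borel_measurable M \<and> integrable M (\<lambda>x. (g x)\<^sup>2)"

lemma integrable_mult_square_integrable:
  assumes "square_integrable M p" "square_integrable M q"
  shows "integrable M (\<lambda>x. p x * q x)"
proof (rule Bochner_Integration.integrable_bound)
  show "integrable M (\<lambda>x. (p x)\<^sup>2 + (q x)\<^sup>2)"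
    using assms by (auto simp: square_integrable_def)
  show "(\<lambda>x. p x * q x) \<in> borel_measurable M"
    using assms by (auto simp: square_integrable_def)
  show "AE x in M. norm (p x * q x) \<le> norm ((p x)\<^sup>2 + (q x)\<^sup>2)"
  proof (intro AE_I2)
    fix x
    have "\<bar>p x * q x\<bar> \<le> 2 * \<bar>p x\<bar> * \<bar>q x\<bar>"
      by (simp add: abs_mult)
    also have "\<dots> \<le> (p x)\<^sup>2 + (q x)\<^sup>2"
      using sum_squares_bound[of "\<bar>p x\<bar>" "\<bar>q x\<bar>"] by simp
    finally show "norm (p x * q x) \<le> norm ((p x)\<^sup>2 + (q x)\<^sup>2)"
      by simp
  qed
qed

lemma integral_deriv_eq_0_if_tendsto_0_at_infinity:
  fixes h h' :: "real \<Rightarrow> real"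
  assumes "\<And>x. (h has_real_derivative h' x) (at x)" "\<And>x. isCont h' x"
    and "integrable lborel h'" and "(h \<longlongrightarrow> 0) at_infinity"
  shows "(\<integral>x. h' x \<partial>lborel) = 0"
proof -
  have "(h \<longlongrightarrow> 0) at_top" "(h \<longlongrightarrow> 0) at_bot"
    using assms(4) by (auto intro: filterlim_mono at_top_le_at_infinity at_bot_le_at_infinity)
  then have "(LBINT x=-\<infinity>..\<infinity>. h' x) = 0 - 0"
    using assms(1-3)
    by (intro interval_integral_FTC_integrable)
       (auto simp: ereal_tendsto_simps1 set_integrable_def
         has_real_derivative_iff_has_vector_derivative[symmetric])
  then show ?thesis
    by (simp add: interval_lebesgue_integral_def set_lebesgue_integral_def)
qed


definition gram :: "(nat \<Rightarrow> real \<Rightarrow> real) \<Rightarrow> nat \<Rightarrow> nat \<Rightarrow> real" where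
  "gram \<gamma> k l = (\<integral>t. \<gamma> k t * \<gamma> l t \<partial>lborel)"

lemma has_bochner_integral_sum_mult_sum:
  fixes \<gamma> :: "nat \<Rightarrow> real \<Rightarrow> real"
  assumes "\<And>k. k < n \<Longrightarrow> square_integrable lborel (\<gamma> k)"
  shows "has_bochner_integral lborel (\<lambda>t. (\<Sum>k<n. b k * \<gamma> k t) * (\<Sum>l<n. b' l * \<gamma> l t))
     (\<Sum>k<n. \<Sum>l<n. b k * b' l * gram \<gamma> k l)"
proof -
  have "has_bochner_integral lborel (\<lambda>t. \<Sum>k<n. \<Sum>l<n. b k * b' l * (\<gamma> k t * \<gamma> l t))
     (\<Sum>k<n. \<Sum>l<n. b k * b' l * gram \<gamma> k l)"
    unfolding gram_def using assms
    by (intro has_bochner_integral_sum has_bochner_integral_mult_right has_bochner_integral_integrable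
        integrable_mult_square_integrable) auto
  then show ?thesis
    by (simp add: sum_product mult_ac)
qed

lemma nn_integral_separable_sum_square:
  fixes \<gamma> :: "nat \<Rightarrow> real \<Rightarrow> real" and c :: "nat \<Rightarrow> nat \<Rightarrow> real"
  assumes sq: "\<And>k. k < n \<Longrightarrow> square_integrable lborel (\<gamma> k)"
  shows "(\<integral>\<^sup>+x. ennreal ((\<Sum>k<n. \<Sum>l<n. c k l * \<gamma> k (fst x) * \<gamma> l (snd x))\<^sup>2) \<partial>lborel) =
    ennreal (\<Sum>l<n. \<Sum>l'<n. \<Sum>k<n. \<Sum>k'<n. c k l * c k' l' * gram \<gamma> k k' * gram \<gamma> l l')"
proof -
  define b where "b l s = (\<Sum>k<n. c k l * \<gamma> k s)" for l s
  define Q where "Q s = (\<Sum>l<n. \<Sum>l'<n. gram \<gamma> l l' * (b l s * b l' s))" for s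
  have sum_eq: "(\<Sum>k<n. \<Sum>l<n. c k l * \<gamma> k s * \<gamma> l t) = (\<Sum>l<n. b l s * \<gamma> l t)" for s t
    unfolding b_def by (subst sum.swap) (simp add: sum_distrib_right)
  have meas [measurable]: "\<gamma> k \<in> borel_measurable borel" if "k < n" for k
    using sq[OF that] by (simp add: square_integrable_def)
  have inner: "has_bochner_integral lborel (\<lambda>t. (\<Sum>k<n. \<Sum>l<n. c k l * \<gamma> k s * \<gamma> l t)\<^sup>2) (Q s)"
    for s
    using has_bochner_integral_sum_mult_sum[where n=n and \<gamma>=\<gamma>, OF sq,
        where b="\<lambda>l. b l s" and b'="\<lambda>l. b l s"]
    unfolding sum_eq power2_eq_square Q_def by (simp add: mult_ac)
  have outer: "has_bochner_integral lborel Q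
      (\<Sum>l<n. \<Sum>l'<n. \<Sum>k<n. \<Sum>k'<n. c k l * c k' l' * gram \<gamma> k k' * gram \<gamma> l l')"
  proof -
    have "has_bochner_integral lborel (\<lambda>s. \<Sum>l<n. \<Sum>l'<n. gram \<gamma> l l' * (b l s * b l' s))
      (\<Sum>l<n. \<Sum>l'<n. gram \<gamma> l l' * (\<Sum>k<n. \<Sum>k'<n. c k l * c k' l' * gram \<gamma> k k'))"
      unfolding b_def
      by (intro has_bochner_integral_sum has_bochner_integral_mult_right
          has_bochner_integral_sum_mult_sum sq)
    then show ?thesis
      unfolding Q_def by (simp add: sum_distrib_left mult_ac)
  qed
  have Q_nonneg: "0 \<le> Q s" for s
    unfolding has_bochner_integral_integral_eq[OF inner, symmetric]
    by (rule Bochner_Integration.integral_nonneg) simp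
  have "(\<integral>\<^sup>+x. ennreal ((\<Sum>k<n. \<Sum>l<n. c k l * \<gamma> k (fst x) * \<gamma> l (snd x))\<^sup>2) \<partial>lborel) =
      (\<integral>\<^sup>+s. (\<integral>\<^sup>+t. ennreal ((\<Sum>k<n. \<Sum>l<n. c k l * \<gamma> k s * \<gamma> l t)\<^sup>2) \<partial>lborel) \<partial>lborel)"
    unfolding lborel_prod[symmetric]
    by (subst lborel.nn_integral_fst[symmetric]) (auto simp: case_prod_beta')
  also have "\<dots> = (\<integral>\<^sup>+s. ennreal (Q s) \<partial>lborel)"
    using inner by (intro nn_integral_cong nn_integral_eq_integral[THEN trans])
      (auto simp: has_bochner_integral_iff)
  also have "\<dots> = ennreal (\<Sum>l<n. \<Sum>l'<n. \<Sum>k<n. \<Sum>k'<n. c k l * c k' l' * gram \<gamma> k k' * gram \<gamma> l l')"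
    using outer Q_nonneg by (subst nn_integral_eq_integral) (auto simp: has_bochner_integral_iff)
  finally show ?thesis .
qed

definition sq_moment :: "nat \<Rightarrow> (real \<Rightarrow> real) \<Rightarrow> real" where
  "sq_moment k g = (\<integral>s. s ^ k * (g s)\<^sup>2 \<partial>lborel)"

lemma
  fixes g :: "'a \<Rightarrow> real"
  assumes "g \<in> borel_measurable M" "\<And>x. 0 \<le> g x" "(\<integral>\<^sup>+x. ennreal (g x) \<partial>M) \<le> ennreal B"
    and "0 \<le> B"
  shows integrable_if_nn_integral_le: "integrable M g"
    and integral_le_if_nn_integral_le: "integral\<^sup>L M g \<le> B"
proof -
  show int: "integrable M g"
    using assms by (intro integrableI_nonneg) (auto simp: top.not_eq_extremum intro: le_less_trans)
  have "ennreal (integral\<^sup>L M g) \<le> ennreal B"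
    using assms(3) by (subst nn_integral_eq_integral[OF int, symmetric]) (auto simp: assms(2))
  then show "integral\<^sup>L M g \<le> B"
    using assms(4) by simp
qed

lemma sq_moment_nonneg: "even k \<Longrightarrow> 0 \<le> sq_moment k g"
  unfolding sq_moment_def by (intro Bochner_Integration.integral_nonneg) (simp add: zero_le_even_power)

section \<open>The smoothed box\<close>

lemma grad_eqI:
  assumes "(F has_derivative (\<lambda>h. w \<bullet> h)) (at x)"
  shows "grad F x = w"
  unfolding grad_def
proof (rule the_equality)
  fix w' assume "(F has_derivative (\<lambda>h. w' \<bullet> h)) (at x)"
  then have "(\<lambda>h. w' \<bullet> h) = (\<lambda>h. w \<bullet> h)"
    using assms has_derivative_unique by blast
  then have "(w' - w) \<bullet> (w' - w) = 0"
    by (metis inner_diff_left diff_self)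
  then show "w' = w" by simp
qed (fact assms)

locale smoothed_box =
  fixes v a :: real
  assumes v_pos: "0 < v" and a_pos: "0 < a"
begin

definition f :: "real \<Rightarrow> real" where
  "f s = (LINT x:{-a..a}|lborel. gauss v (s - x))"

definition f' :: "real \<Rightarrow> real" where
  "f' s = gauss v (s + a) - gauss v (s - a)"

definition f'' :: "real \<Rightarrow> real" where
  "f'' s = ((s - a) * gauss v (s - a) - (s + a) * gauss v (s + a)) / v"

lemma set_integrable_gauss_shift: "set_integrable lborel {-a..a} (\<lambda>x. gauss v (s - x))"
  using v_pos by (intro borel_integrable_atLeastAtMost' continuous_intros) auto

lemma f_nonneg: "0 \<le> f s"
  unfolding f_def set_lebesgue_integral_def using gauss_pos[OF v_pos]
  by (intro Bochner_Integration.integral_nonneg) (simp add: less_imp_le)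

lemma f_eq_convolution: "f s = (\<integral>y. gauss v y * indicator {-a..a} (s - y) \<partial>lborel)"
proof -
  have "(\<integral>y. gauss v y * indicator {-a..a} (s - y) \<partial>lborel) =
      \<bar>-1\<bar> *\<^sub>R (\<integral>x. gauss v (s + (-1) * x) * indicator {-a..a} (s - (s + (-1) * x)) \<partial>lborel)"
    by (rule lborel_integral_real_affine) simp
  then show ?thesis
    by (simp add: f_def set_lebesgue_integral_def mult.commute)
qed

lemma f_eq_antiderivative_diff:
  assumes G: "\<And>x. (G has_real_derivative gauss v x) (at x)"
  shows "f s = G (s + a) - G (s - a)"
proof -
  have "f s = (\<integral>y. indicator {s-a..s+a} y * gauss v y \<partial>lborel)"
    unfolding f_eq_convolution by (intro Bochner_Integration.integral_cong) (auto simp: indicator_def)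
  also have "\<dots> = (LBINT y=s-a..s+a. gauss v y)"
    using a_pos by (simp add: interval_integral_Icc set_lebesgue_integral_def)
  also have "\<dots> = G (s + a) - G (s - a)"
  proof (rule interval_integral_FTC_finite)
    show "continuous_on {min (s - a) (s + a)..max (s - a) (s + a)} (gauss v)"
      using isCont_gauss[OF v_pos] by (simp add: continuous_at_imp_continuous_on)
    show "(G has_vector_derivative gauss v x) (at x within {min (s - a) (s + a)..max (s - a) (s + a)})"
      for x
      using has_field_derivative_at_within[OF G]
      by (simp add: has_real_derivative_iff_has_vector_derivative)
  qed
  finally show ?thesis .
qed

lemma has_real_derivative_f: "(f has_real_derivative f' s) (at s)"
proof -
  obtain G where G: "\<And>x. (G has_real_derivative gauss v x) (at x)"
    using gauss_antiderivative_exists[OF v_pos] by blast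
  have "f = (\<lambda>s. G (s + a) - G (s - a))"
    using f_eq_antiderivative_diff[OF G] by auto
  then show ?thesis
    unfolding f'_def by (auto intro!: derivative_eq_intros DERIV_chain2[OF G])
qed

lemma has_real_derivative_f': "(f' has_real_derivative f'' s) (at s)"
  unfolding f'_def[abs_def] f''_def using v_pos
  by (auto intro!: derivative_eq_intros DERIV_chain2[OF has_real_derivative_gauss[OF v_pos]]
      simp: field_simps)

lemma deriv_f: "deriv f = f'"
  using has_real_derivative_f DERIV_imp_deriv by blast

lemma deriv_f': "deriv f' = f''"
  using has_real_derivative_f' DERIV_imp_deriv by blast

lemma isCont_f: "isCont f s"
  using has_real_derivative_f by (rule DERIV_isCont)

lemma isCont_f': "isCont f' s"
  using has_real_derivative_f' by (rule DERIV_isCont)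

lemma isCont_f'': "isCont f'' s"
  unfolding f''_def gauss_def using v_pos by (intro continuous_intros) auto

lemma f_measurable [measurable]: "f \<in> borel_measurable borel"
  using isCont_f by (intro borel_measurable_continuous_onI continuous_at_imp_continuous_on) auto

lemma f'_measurable [measurable]: "f' \<in> borel_measurable borel"
  unfolding f'_def[abs_def] by measurable

lemma f''_measurable [measurable]: "f'' \<in> borel_measurable borel"
  unfolding f''_def[abs_def] by measurable

lemma f_le_tail:
  assumes "a \<le> \<bar>s\<bar>"
  shows "f s \<le> 2 * a * (gauss v (s - a) + gauss v (s + a))"
proof -
  have "f s \<le> (LINT x:{-a..a}|lborel. gauss v (s - a) + gauss v (s + a))"
    unfolding f_def
  proof (rule set_integral_mono[OF set_integrable_gauss_shift])
    show "set_integrable lborel {-a..a} (\<lambda>x. gauss v (s - a) + gauss v (s + a))"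
      by (intro borel_integrable_atLeastAtMost' continuous_on_const)
    fix x assume x: "x \<in> {-a..a}"
    show "gauss v (s - x) \<le> gauss v (s - a) + gauss v (s + a)"
    proof (cases "0 \<le> s")
      case True
      then have "gauss v (s - x) \<le> gauss v (s - a)"
        using assms x by (intro gauss_mono_abs[OF v_pos]) auto
      then show ?thesis using gauss_pos[OF v_pos, of "s + a"] by linarith
    next
      case False
      then have "gauss v (s - x) \<le> gauss v (s + a)"
        using assms x by (intro gauss_mono_abs[OF v_pos]) auto
      then show ?thesis using gauss_pos[OF v_pos, of "s - a"] by linarith
    qed
  qed
  also have "\<dots> = 2 * a * (gauss v (s - a) + gauss v (s + a))"
    using a_pos by (simp add: set_integral_const)
  finally show ?thesis .
qed

lemma tendsto_power_mult_f': "((\<lambda>s. s ^ k * f' s) \<longlongrightarrow> 0) at_infinity"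
  using tendsto_diff[OF tendsto_power_mult_gauss[OF v_pos, of k "-a"]
      tendsto_power_mult_gauss[OF v_pos, of k a]]
  by (simp add: f'_def algebra_simps)

lemma tendsto_power_mult_f: "((\<lambda>s. s ^ k * f s) \<longlongrightarrow> 0) at_infinity"
proof (rule Lim_null_comparison)
  show "\<forall>\<^sub>F s in at_infinity. norm (s ^ k * f s) \<le>
      2 * a * (\<bar>s ^ k * gauss v (s - a)\<bar> + \<bar>s ^ k * gauss v (s - - a)\<bar>)"
    unfolding eventually_at_infinity
  proof (intro exI allI impI)
    fix s :: real assume "a \<le> norm s"
    then have "\<bar>s\<bar> ^ k * f s \<le> \<bar>s\<bar> ^ k * (2 * a * (gauss v (s - a) + gauss v (s + a)))"
      by (intro mult_left_mono f_le_tail) auto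
    then show "norm (s ^ k * f s) \<le> 2 * a * (\<bar>s ^ k * gauss v (s - a)\<bar> + \<bar>s ^ k * gauss v (s - - a)\<bar>)"
      using f_nonneg[of s] gauss_pos[OF v_pos]
      by (simp add: abs_mult power_abs algebra_simps less_imp_le)
  qed
  show "((\<lambda>s. 2 * a * (\<bar>s ^ k * gauss v (s - a)\<bar> + \<bar>s ^ k * gauss v (s - - a)\<bar>)) \<longlongrightarrow> 0)
      at_infinity"
    using tendsto_power_mult_gauss[OF v_pos]
    by (intro tendsto_mult_right_zero tendsto_add_zero tendsto_rabs_zero)
qed

lemma has_derivative_f_comp [derivative_intros]:
  "(g has_derivative g') (at z within S) \<Longrightarrow>
    ((\<lambda>x. f (g x)) has_derivative (\<lambda>h. g' h * f' (g z))) (at z within S)"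
  by (rule DERIV_compose_FDERIV[OF has_real_derivative_f])

lemma has_derivative_f'_comp [derivative_intros]:
  "(g has_derivative g') (at z within S) \<Longrightarrow>
    ((\<lambda>x. f' (g x)) has_derivative (\<lambda>h. g' h * f'' (g z))) (at z within S)"
  by (rule DERIV_compose_FDERIV[OF has_real_derivative_f'])

lemma conv2_gauss2_outer_indicator:
  "conv2 (gauss2 v) (outer (indicator {-a..a})) x = f (fst x) * f (snd x)"
proof -
  have int: "integrable lborel (\<lambda>y. gauss v y * indicator {-a..a} (s - y))" for s
  proof (rule Bochner_Integration.integrable_bound)
    show "integrable lborel (gauss v)"
      using integrable.intros[OF has_bochner_integral_gauss[OF v_pos, of 0]] by simp
    show "AE y in lborel. norm (gauss v y * indicator {-a..a} (s - y)) \<le> norm (gauss v y)"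
      by (auto simp: indicator_def)
  qed measurable
  have "conv2 (gauss2 v) (outer (indicator {-a..a})) x =
      (\<integral>y. (gauss v (fst y) * indicator {-a..a} (fst x - fst y)) *
        (gauss v (snd y) * indicator {-a..a} (snd x - snd y)) \<partial>(lborel \<Otimes>\<^sub>M lborel))"
    unfolding conv2_def gauss2_def outer_def lborel_prod
    by (intro Bochner_Integration.integral_cong) auto
  also have "\<dots> = f (fst x) * f (snd x)"
    unfolding f_eq_convolution by (intro lborel_pair.integral_mult_fst_snd int)
  finally show ?thesis .
qed

lemma curl_field_eq:
  "curl_field v (indicator {-a..a}) = (\<lambda>(s, t). s * f s * f' t - t * f' s * f t)"
proof -
  have "grad (\<lambda>x. f (fst x) * f (snd x)) x = (f' (fst x) * f (snd x), f (fst x) * f' (snd x))" for x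
    by (rule grad_eqI, (rule derivative_eq_intros refl)+) (auto simp: algebra_simps)
  then show ?thesis
    unfolding curl_field_def conv2_gauss2_outer_indicator[abs_def]
    by (auto simp: rot_def algebra_simps)
qed

definition curl_grad :: "real \<times> real \<Rightarrow> real \<times> real" where
  "curl_grad = (\<lambda>(s, t). (s * f' s * f' t + f s * f' t - t * f t * f'' s,
     s * f s * f'' t - f t * f' s - t * f' s * f' t))"

lemma has_derivative_curl_field:
  "(curl_field v (indicator {-a..a}) has_derivative (\<lambda>h. curl_grad x \<bullet> h)) (at x)"
  unfolding curl_field_eq curl_grad_def case_prod_beta
  by (rule derivative_eq_intros refl)+ (auto simp: algebra_simps)

lemma gauss_mult_gauss_opposite:
  "gauss v (s + a) * gauss v (s - a) = exp (- (a\<^sup>2) / v) * gauss_sq_integral v * gauss (v / 2) s"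
  using gauss_mult_gauss[OF v_pos, of s "-a" a] by (simp add: power2_eq_square)

lemma f'_sq:
  "(f' s)\<^sup>2 = gauss_sq_integral v *
     (gauss (v / 2) (s + a) + gauss (v / 2) (s - a) - 2 * exp (- (a\<^sup>2) / v) * gauss (v / 2) s)"
  using gauss_sq[OF v_pos, of "s + a"] gauss_sq[OF v_pos, of "s - a"] gauss_mult_gauss_opposite[of s]
  by (simp add: f'_def power2_diff algebra_simps)

lemma f''_sq:
  "(f'' s)\<^sup>2 = gauss_sq_integral v / v\<^sup>2 *
     ((s + a)\<^sup>2 * gauss (v / 2) (s + a) + (s - a)\<^sup>2 * gauss (v / 2) (s - a)
      - 2 * exp (- (a\<^sup>2) / v) * (s\<^sup>2 - a\<^sup>2) * gauss (v / 2) s)"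
proof -
  have "(f'' s)\<^sup>2 = ((s + a)\<^sup>2 * (gauss v (s + a))\<^sup>2 + (s - a)\<^sup>2 * (gauss v (s - a))\<^sup>2
      - 2 * (s\<^sup>2 - a\<^sup>2) * (gauss v (s + a) * gauss v (s - a))) / v\<^sup>2"
    by (simp add: f''_def power_divide power2_diff algebra_simps power2_eq_square)
  also have "\<dots> = gauss_sq_integral v / v\<^sup>2 *
     ((s + a)\<^sup>2 * gauss (v / 2) (s + a) + (s - a)\<^sup>2 * gauss (v / 2) (s - a)
      - 2 * exp (- (a\<^sup>2) / v) * (s\<^sup>2 - a\<^sup>2) * gauss (v / 2) s)"
    unfolding gauss_sq[OF v_pos] gauss_mult_gauss_opposite
    using v_pos by (simp add: field_simps)
  finally show ?thesis .
qed

lemma has_bochner_integral_f'_sq: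
  "has_bochner_integral lborel (\<lambda>s. (f' s)\<^sup>2) (gauss_sq_integral v * (2 - 2 * exp (- (a\<^sup>2) / v)))"
proof -
  have v2: "0 < v / 2" using v_pos by simp
  have "has_bochner_integral lborel (\<lambda>s. gauss_sq_integral v * (gauss (v / 2) (s - - a)
      + gauss (v / 2) (s - a) - 2 * exp (- (a\<^sup>2) / v) * gauss (v / 2) (s - 0)))
      (gauss_sq_integral v * (1 + 1 - 2 * exp (- (a\<^sup>2) / v) * 1))"
    by (intro has_bochner_integral_mult_right has_bochner_integral_add has_bochner_integral_diff
        has_bochner_integral_gauss[OF v2])
  then show ?thesis
    by (simp add: f'_sq)
qed

lemma has_bochner_integral_s_sq_f'_sq:
  "has_bochner_integral lborel (\<lambda>s. s\<^sup>2 * (f' s)\<^sup>2)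
     (gauss_sq_integral v * (v + 2 * a\<^sup>2 - exp (- (a\<^sup>2) / v) * v))"
proof -
  have v2: "0 < v / 2" using v_pos by simp
  have "has_bochner_integral lborel (\<lambda>s. gauss_sq_integral v * (gauss (v / 2) (s - - a) * s\<^sup>2
      + gauss (v / 2) (s - a) * s\<^sup>2 - 2 * exp (- (a\<^sup>2) / v) * (gauss (v / 2) (s - 0) * s\<^sup>2)))
      (gauss_sq_integral v *
        (((- a)\<^sup>2 + v / 2) + (a\<^sup>2 + v / 2) - 2 * exp (- (a\<^sup>2) / v) * (0\<^sup>2 + v / 2)))"
    by (intro has_bochner_integral_mult_right has_bochner_integral_add has_bochner_integral_diff
        has_bochner_integral_gauss_moment_2[OF v2])
  then show ?thesis
    by (rule has_bochner_integral_cong[THEN iffD1, rotated -1]) (auto simp: f'_sq algebra_simps)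
qed

lemma has_bochner_integral_f''_sq:
  "has_bochner_integral lborel (\<lambda>s. (f'' s)\<^sup>2)
     (gauss_sq_integral v / v\<^sup>2 * (v - exp (- (a\<^sup>2) / v) * v + 2 * exp (- (a\<^sup>2) / v) * a\<^sup>2))"
proof -
  have v2: "0 < v / 2" using v_pos by simp
  have "has_bochner_integral lborel (\<lambda>s. gauss_sq_integral v / v\<^sup>2 *
      (gauss (v / 2) (s - - a) * (s - - a)\<^sup>2 + gauss (v / 2) (s - a) * (s - a)\<^sup>2
       - 2 * exp (- (a\<^sup>2) / v) * (gauss (v / 2) (s - 0) * s\<^sup>2 - a\<^sup>2 * gauss (v / 2) (s - 0))))
      (gauss_sq_integral v / v\<^sup>2 * (v / 2 + v / 2 - 2 * exp (- (a\<^sup>2) / v) * ((0\<^sup>2 + v / 2) - a\<^sup>2 * 1)))"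
    by (intro has_bochner_integral_mult_right has_bochner_integral_add has_bochner_integral_diff
        has_bochner_integral_gauss_moment_2[OF v2] has_bochner_integral_gauss_central_moment_2[OF v2]
        has_bochner_integral_gauss[OF v2])
  then show ?thesis
    by (rule has_bochner_integral_cong[THEN iffD1, rotated -1]) (auto simp: f''_sq algebra_simps)
qed

lemma ennreal_f_eq_nn_integral:
  "ennreal (f s) = (\<integral>\<^sup>+x. ennreal (gauss v (s - x)) * indicator {-a..a} x \<partial>lborel)"
  using set_integrable_gauss_shift[of s] gauss_pos[OF v_pos]
  unfolding f_def set_lebesgue_integral_def set_integrable_def
  by (subst nn_integral_eq_integral[symmetric])
     (auto simp: nn_integral_set_ennreal mult.commute less_imp_le intro!: nn_integral_cong)

lemma ennreal_f_sq_le: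
  "ennreal ((f s)\<^sup>2) \<le>
    ennreal (2 * a * gauss_sq_integral v) *
      (\<integral>\<^sup>+x. ennreal (gauss (v / 2) (s - x)) * indicator {-a..a} x \<partial>lborel)"
proof -
  let ?F = "\<lambda>x. ennreal (gauss v (s - x)) * indicator {-a..a} x"
  have "ennreal ((f s)\<^sup>2) = (ennreal (f s))\<^sup>2"
    using f_nonneg by (simp add: ennreal_power)
  also have "\<dots> = (\<integral>\<^sup>+x. ?F x * indicator {-a..a} x \<partial>lborel)\<^sup>2"
    unfolding ennreal_f_eq_nn_integral by (simp add: mult.assoc flip: indicator_inter_arith)
  also have "\<dots> \<le> (\<integral>\<^sup>+x. (?F x)\<^sup>2 \<partial>lborel) * (\<integral>\<^sup>+x. (indicator {-a..a} x)\<^sup>2 \<partial>lborel)"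
    by (rule Cauchy_Schwarz_nn_integral) measurable
  also have "(\<integral>\<^sup>+x. (indicator {-a..a} x)\<^sup>2 \<partial>lborel) = ennreal (2 * a)"
    using a_pos by (simp add: power2_eq_square flip: indicator_inter_arith)
  also have "(\<integral>\<^sup>+x. (?F x)\<^sup>2 \<partial>lborel) =
      ennreal (gauss_sq_integral v) *
        (\<integral>\<^sup>+x. ennreal (gauss (v / 2) (s - x)) * indicator {-a..a} x \<partial>lborel)"
  proof -
    have "(?F x)\<^sup>2 =
        ennreal (gauss_sq_integral v) * (ennreal (gauss (v / 2) (s - x)) * indicator {-a..a} x)"
      for x
      using gauss_sq[OF v_pos, of "s - x"] gauss_pos[OF v_pos] gauss_sq_integral_pos[OF v_pos]
      by (cases "x \<in> {-a..a}")
         (simp_all add: power2_eq_square less_imp_le ennreal_mult' flip: ennreal_mult)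
    then show ?thesis
      by (simp add: nn_integral_cmult)
  qed
  finally show ?thesis
    using a_pos gauss_sq_integral_pos[OF v_pos] by (simp add: ennreal_mult' mult_ac)
qed

lemma nn_integral_weighted_f_sq_le:
  fixes p m :: "real \<Rightarrow> real"
  assumes [measurable]: "p \<in> borel_measurable borel" and p_nonneg: "\<And>s. 0 \<le> p s"
    and m: "\<And>x. has_bochner_integral lborel (\<lambda>s. gauss (v / 2) (s - x) * p s) (m x)"
    and I: "(m has_integral I) {-a..a}"
  shows "(\<integral>\<^sup>+s. ennreal (p s * (f s)\<^sup>2) \<partial>lborel) \<le> ennreal (2 * a * gauss_sq_integral v * I)"
proof -
  let ?g = "\<lambda>x s. ennreal (gauss (v / 2) (s - x) * p s)"
  have v2: "0 < v / 2" using v_pos by simp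
  have m_nonneg: "0 \<le> m x" for x
    unfolding has_bochner_integral_integral_eq[OF m, symmetric]
    using gauss_pos[OF v2] p_nonneg
    by (intro Bochner_Integration.integral_nonneg) (simp add: less_imp_le)
  have I_nonneg: "0 \<le> I"
    using has_integral_nonneg[OF I] m_nonneg by auto
  have "(\<integral>\<^sup>+s. ennreal (p s * (f s)\<^sup>2) \<partial>lborel) \<le>
      (\<integral>\<^sup>+s. ennreal (2 * a * gauss_sq_integral v) *
         (\<integral>\<^sup>+x. ?g x s * indicator {-a..a} x \<partial>lborel) \<partial>lborel)"
  proof (rule nn_integral_mono)
    fix s
    have "ennreal (p s * (f s)\<^sup>2) = ennreal (p s) * ennreal ((f s)\<^sup>2)"
      using p_nonneg by (simp add: ennreal_mult)
    also have "\<dots> \<le> ennreal (p s) * (ennreal (2 * a * gauss_sq_integral v) *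
        (\<integral>\<^sup>+x. ennreal (gauss (v / 2) (s - x)) * indicator {-a..a} x \<partial>lborel))"
      by (intro mult_left_mono ennreal_f_sq_le) simp
    also have "\<dots> = ennreal (2 * a * gauss_sq_integral v) *
        (\<integral>\<^sup>+x. ?g x s * indicator {-a..a} x \<partial>lborel)"
      using p_nonneg gauss_pos[OF v2]
      by (simp add: ennreal_mult less_imp_le mult_ac flip: nn_integral_cmult)
    finally show "ennreal (p s * (f s)\<^sup>2) \<le> \<dots>" .
  qed
  also have "\<dots> = ennreal (2 * a * gauss_sq_integral v) *
      (\<integral>\<^sup>+x. (\<integral>\<^sup>+s. ?g x s \<partial>lborel) * indicator {-a..a} x \<partial>lborel)"
    by (simp add: nn_integral_cmult lborel_pair.Fubini'[of "\<lambda>x s. ?g x s * indicator {-a..a} x"]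
        nn_integral_multc)
  also have "(\<integral>\<^sup>+x. (\<integral>\<^sup>+s. ?g x s \<partial>lborel) * indicator {-a..a} x \<partial>lborel) = ennreal I"
  proof -
    have "(\<integral>\<^sup>+s. ?g x s \<partial>lborel) = ennreal (m x)" for x
      using m gauss_pos[OF v2] p_nonneg
      by (subst nn_integral_eq_integral) (auto simp: has_bochner_integral_iff less_imp_le)
    then show ?thesis
      using I m_nonneg by (simp add: nn_integral_has_integral_lebesgue')
  qed
  finally show ?thesis
    using a_pos gauss_sq_integral_pos[OF v_pos] I_nonneg by (simp add: ennreal_mult)
qed

lemma nn_integral_f_sq_le:
  "(\<integral>\<^sup>+s. ennreal ((f s)\<^sup>2) \<partial>lborel) \<le> ennreal (4 * a\<^sup>2 * gauss_sq_integral v)"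
proof -
  have "(\<integral>\<^sup>+s. ennreal (1 * (f s)\<^sup>2) \<partial>lborel) \<le> ennreal (2 * a * gauss_sq_integral v * (2 * a))"
  proof (rule nn_integral_weighted_f_sq_le)
    show "has_bochner_integral lborel (\<lambda>s. gauss (v / 2) (s - x) * 1) 1" for x
      using has_bochner_integral_gauss[of "v / 2" x] v_pos by simp
    show "((\<lambda>x. 1) has_integral 2 * a) {-a..a}"
      using has_integral_const_real[of "1::real" "-a" a] a_pos by (simp add: mult.commute)
  qed auto
  then show ?thesis
    by (simp add: power2_eq_square mult_ac)
qed

lemma nn_integral_s4_f_sq_le:
  "(\<integral>\<^sup>+s. ennreal (s ^ 4 * (f s)\<^sup>2) \<partial>lborel) \<le>
     ennreal (2 * a * gauss_sq_integral v * (2 * a ^ 5 / 5 + 2 * v * a ^ 3 + 3 / 2 * v\<^sup>2 * a))"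
proof (rule nn_integral_weighted_f_sq_le)
  show "has_bochner_integral lborel (\<lambda>s. gauss (v / 2) (s - x) * s ^ 4)
      (x ^ 4 + 3 * v * x\<^sup>2 + 3 / 4 * v\<^sup>2)" for x
    using has_bochner_integral_gauss_moment_4[of "v / 2" x] v_pos
    by (simp add: power2_eq_square mult_ac)
  let ?F = "\<lambda>x::real. x ^ 5 / 5 + v * x ^ 3 + 3 / 4 * v\<^sup>2 * x"
  have "((\<lambda>x. x ^ 4 + 3 * v * x\<^sup>2 + 3 / 4 * v\<^sup>2) has_integral (?F a - ?F (-a))) {-a..a}"
    using a_pos
    by (intro fundamental_theorem_of_calculus)
       (auto intro!: derivative_eq_intros simp: has_real_derivative_iff_has_vector_derivative[symmetric]
         field_simps)
  moreover have "?F a - ?F (-a) = 2 * a ^ 5 / 5 + 2 * v * a ^ 3 + 3 / 2 * v\<^sup>2 * a"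
    by (simp add: field_simps)
  ultimately show "((\<lambda>x. x ^ 4 + 3 * v * x\<^sup>2 + 3 / 4 * v\<^sup>2) has_integral
      (2 * a ^ 5 / 5 + 2 * v * a ^ 3 + 3 / 2 * v\<^sup>2 * a)) {-a..a}"
    by metis
qed auto

lemma square_integrable_f: "square_integrable lborel f"
  unfolding square_integrable_def using nn_integral_f_sq_le a_pos gauss_sq_integral_pos[OF v_pos]
  by (auto intro: integrable_if_nn_integral_le)

lemma square_integrable_s_sq_f: "square_integrable lborel (\<lambda>s. s\<^sup>2 * f s)"
  unfolding square_integrable_def
  using nn_integral_s4_f_sq_le a_pos v_pos gauss_sq_integral_pos[OF v_pos]
  by (auto simp: power_mult_distrib simp flip: power_mult intro!: integrable_if_nn_integral_le)

lemma square_integrable_f': "square_integrable lborel f'"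
  unfolding square_integrable_def using integrable.intros[OF has_bochner_integral_f'_sq] by simp

lemma square_integrable_s_f': "square_integrable lborel (\<lambda>s. s * f' s)"
  unfolding square_integrable_def using integrable.intros[OF has_bochner_integral_s_sq_f'_sq]
  by (simp add: power_mult_distrib)

lemma square_integrable_f'': "square_integrable lborel f''"
  unfolding square_integrable_def using integrable.intros[OF has_bochner_integral_f''_sq] by simp

lemma integrable_products:
  assumes "p \<in> {f, f', f'', \<lambda>s. s * f' s, \<lambda>s. s\<^sup>2 * f s}"
    and "q \<in> {f, f', f'', \<lambda>s. s * f' s, \<lambda>s. s\<^sup>2 * f s}"
  shows "integrable lborel (\<lambda>s. p s * q s)"
  using assms square_integrable_f square_integrable_f' square_integrable_f'' square_integrable_s_f'
    square_integrable_s_sq_f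
  by (auto intro: integrable_mult_square_integrable)

lemma integral_s_f'_f: "(\<integral>s. s * f' s * f s \<partial>lborel) = - sq_moment 0 f / 2"
proof -
  have "(\<integral>s. f s * f s + 2 * (s * f' s * f s) \<partial>lborel) = 0"
  proof (rule integral_deriv_eq_0_if_tendsto_0_at_infinity)
    show "((\<lambda>s. s * f s * f s) has_real_derivative f x * f x + 2 * (x * f' x * f x)) (at x)" for x
      by (auto intro!: derivative_eq_intros has_real_derivative_f simp: algebra_simps)
    show "isCont (\<lambda>s. f s * f s + 2 * (s * f' s * f s)) x" for x
      using isCont_f isCont_f' by (intro continuous_intros)
    show "integrable lborel (\<lambda>s. f s * f s + 2 * (s * f' s * f s))"
      by (intro Bochner_Integration.integrable_add integrable_mult_right integrable_products) auto
    show "((\<lambda>s. s * f s * f s) \<longlongrightarrow> 0) at_infinity"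
      using tendsto_mult_zero[OF tendsto_power_mult_f[of 1] tendsto_power_mult_f[of 0]] by simp
  qed
  moreover have "(\<integral>s. f s * f s + 2 * (s * f' s * f s) \<partial>lborel) =
      sq_moment 0 f + 2 * (\<integral>s. s * f' s * f s \<partial>lborel)"
    unfolding sq_moment_def
    by (subst Bochner_Integration.integral_add)
       (auto simp: power2_eq_square intro!: integrable_products)
  ultimately show ?thesis by simp
qed

lemma integral_s_f'_f'': "(\<integral>s. s * f' s * f'' s \<partial>lborel) = - sq_moment 0 f' / 2"
proof -
  have "(\<integral>s. f' s * f' s + 2 * (s * f' s * f'' s) \<partial>lborel) = 0"
  proof (rule integral_deriv_eq_0_if_tendsto_0_at_infinity)
    show "((\<lambda>s. s * f' s * f' s) has_real_derivative f' x * f' x + 2 * (x * f' x * f'' x)) (at x)" for x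
      by (auto intro!: derivative_eq_intros has_real_derivative_f' simp: algebra_simps)
    show "isCont (\<lambda>s. f' s * f' s + 2 * (s * f' s * f'' s)) x" for x
      using isCont_f' isCont_f'' by (intro continuous_intros)
    show "integrable lborel (\<lambda>s. f' s * f' s + 2 * (s * f' s * f'' s))"
      by (intro Bochner_Integration.integrable_add integrable_mult_right integrable_products) auto
    show "((\<lambda>s. s * f' s * f' s) \<longlongrightarrow> 0) at_infinity"
      using tendsto_mult_zero[OF tendsto_power_mult_f'[of 1] tendsto_power_mult_f'[of 0]] by simp
  qed
  moreover have "(\<integral>s. f' s * f' s + 2 * (s * f' s * f'' s) \<partial>lborel) =
      sq_moment 0 f' + 2 * (\<integral>s. s * f' s * f'' s \<partial>lborel)"
    unfolding sq_moment_def
    by (subst Bochner_Integration.integral_add)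
       (auto simp: power2_eq_square intro!: integrable_products)
  ultimately show ?thesis by simp
qed

lemma integral_s_f'_s_sq_f: "(\<integral>s. s * f' s * (s\<^sup>2 * f s) \<partial>lborel) = - 3 / 2 * sq_moment 2 f"
proof -
  have "(\<integral>s. 3 * (f s * (s\<^sup>2 * f s)) + 2 * (s * f' s * (s\<^sup>2 * f s)) \<partial>lborel) = 0"
  proof (rule integral_deriv_eq_0_if_tendsto_0_at_infinity)
    show "((\<lambda>s. s ^ 3 * f s * f s) has_real_derivative
        3 * (f x * (x\<^sup>2 * f x)) + 2 * (x * f' x * (x\<^sup>2 * f x))) (at x)" for x
      by (auto intro!: derivative_eq_intros has_real_derivative_f
          simp: algebra_simps power2_eq_square eval_nat_numeral)
    show "isCont (\<lambda>s. 3 * (f s * (s\<^sup>2 * f s)) + 2 * (s * f' s * (s\<^sup>2 * f s))) x" for x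
      using isCont_f isCont_f' by (intro continuous_intros)
    show "integrable lborel (\<lambda>s. 3 * (f s * (s\<^sup>2 * f s)) + 2 * (s * f' s * (s\<^sup>2 * f s)))"
      by (intro Bochner_Integration.integrable_add integrable_mult_right integrable_products) auto
    show "((\<lambda>s. s ^ 3 * f s * f s) \<longlongrightarrow> 0) at_infinity"
      using tendsto_mult_zero[OF tendsto_power_mult_f[of 3] tendsto_power_mult_f[of 0]] by simp
  qed
  moreover
  have "integrable lborel (\<lambda>s. f s * (s\<^sup>2 * f s))" "integrable lborel (\<lambda>s. s * f' s * (s\<^sup>2 * f s))"
    by (auto intro!: integrable_products)
  then have "(\<integral>s. 3 * (f s * (s\<^sup>2 * f s)) + 2 * (s * f' s * (s\<^sup>2 * f s)) \<partial>lborel) =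
      3 * (\<integral>s. f s * (s\<^sup>2 * f s) \<partial>lborel) + 2 * (\<integral>s. s * f' s * (s\<^sup>2 * f s) \<partial>lborel)"
    by simp
  moreover have "(\<integral>s. f s * (s\<^sup>2 * f s) \<partial>lborel) = sq_moment 2 f"
    unfolding sq_moment_def by (simp add: power2_eq_square mult_ac)
  ultimately show ?thesis by simp
qed

lemma integral_f_f'': "(\<integral>s. f s * f'' s \<partial>lborel) = - sq_moment 0 f'"
proof -
  have "(\<integral>s. f' s * f' s + f s * f'' s \<partial>lborel) = 0"
  proof (rule integral_deriv_eq_0_if_tendsto_0_at_infinity)
    show "((\<lambda>s. f s * f' s) has_real_derivative f' x * f' x + f x * f'' x) (at x)" for x
      by (auto intro!: derivative_eq_intros has_real_derivative_f has_real_derivative_f')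
    show "isCont (\<lambda>s. f' s * f' s + f s * f'' s) x" for x
      using isCont_f isCont_f' isCont_f'' by (intro continuous_intros)
    show "integrable lborel (\<lambda>s. f' s * f' s + f s * f'' s)"
      by (intro Bochner_Integration.integrable_add integrable_products) auto
    show "((\<lambda>s. f s * f' s) \<longlongrightarrow> 0) at_infinity"
      using tendsto_mult_zero[OF tendsto_power_mult_f[of 0] tendsto_power_mult_f'[of 0]] by simp
  qed
  moreover have "(\<integral>s. f' s * f' s + f s * f'' s \<partial>lborel) = sq_moment 0 f' + (\<integral>s. f s * f'' s \<partial>lborel)"
    unfolding sq_moment_def
    by (subst Bochner_Integration.integral_add)
       (auto simp: power2_eq_square intro!: integrable_products)
  ultimately show ?thesis by simp
qed

lemma integral_f''_s_sq_f: "(\<integral>s. f'' s * (s\<^sup>2 * f s) \<partial>lborel) = sq_moment 0 f - sq_moment 2 f'"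
proof -
  have "(\<integral>s. 2 * (s * f' s * f s) + s * f' s * (s * f' s) + f'' s * (s\<^sup>2 * f s) \<partial>lborel) = 0"
  proof (rule integral_deriv_eq_0_if_tendsto_0_at_infinity)
    show "((\<lambda>s. s\<^sup>2 * f s * f' s) has_real_derivative
        2 * (x * f' x * f x) + x * f' x * (x * f' x) + f'' x * (x\<^sup>2 * f x)) (at x)" for x
      by (auto intro!: derivative_eq_intros has_real_derivative_f has_real_derivative_f'
          simp: algebra_simps power2_eq_square)
    show "isCont (\<lambda>s. 2 * (s * f' s * f s) + s * f' s * (s * f' s) + f'' s * (s\<^sup>2 * f s)) x" for x
      using isCont_f isCont_f' isCont_f'' by (intro continuous_intros)
    show "integrable lborel (\<lambda>s. 2 * (s * f' s * f s) + s * f' s * (s * f' s) + f'' s * (s\<^sup>2 * f s))"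
      by (intro Bochner_Integration.integrable_add integrable_mult_right integrable_products) auto
    show "((\<lambda>s. s\<^sup>2 * f s * f' s) \<longlongrightarrow> 0) at_infinity"
      using tendsto_mult_zero[OF tendsto_power_mult_f[of 2] tendsto_power_mult_f'[of 0]] by simp
  qed
  moreover
  have iA: "integrable lborel (\<lambda>s. s * f' s * f s)"
    and iB: "integrable lborel (\<lambda>s. s * f' s * (s * f' s))"
    and iC: "integrable lborel (\<lambda>s. f'' s * (s\<^sup>2 * f s))"
    by (auto intro!: integrable_products)
  then have "(\<integral>s. 2 * (s * f' s * f s) + s * f' s * (s * f' s) + f'' s * (s\<^sup>2 * f s) \<partial>lborel) =
      2 * (\<integral>s. s * f' s * f s \<partial>lborel) + (\<integral>s. s * f' s * (s * f' s) \<partial>lborel)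
      + (\<integral>s. f'' s * (s\<^sup>2 * f s) \<partial>lborel)"
    by simp
  moreover have "(\<integral>s. s * f' s * (s * f' s) \<partial>lborel) = sq_moment 2 f'"
    unfolding sq_moment_def by (simp add: power2_eq_square mult_ac)
  ultimately show ?thesis
    using integral_s_f'_f by simp
qed

definition \<gamma> :: "nat \<Rightarrow> real \<Rightarrow> real" where
  "\<gamma> = (!) [\<lambda>s. s * f' s, f, f'', \<lambda>s. s\<^sup>2 * f s]"

definition curl_coeff :: "nat \<Rightarrow> nat \<Rightarrow> real" where
  "curl_coeff k l = [[-2, -1, 0, 0], [-1, 0, 0, 0], [0, 0, 0, 1], [0, 0, 1, 0]] ! k ! l"

lemma curl_grad_rot_eq:
  "curl_grad x \<bullet> rot x = (\<Sum>k<4. \<Sum>l<4. curl_coeff k l * \<gamma> k (fst x) * \<gamma> l (snd x))"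
  by (simp add: curl_grad_def rot_def curl_coeff_def \<gamma>_def case_prod_beta eval_nat_numeral
      algebra_simps power2_eq_square)

lemma square_integrable_\<gamma>: "k < 4 \<Longrightarrow> square_integrable lborel (\<gamma> k)"
  using square_integrable_f square_integrable_f' square_integrable_f'' square_integrable_s_f'
    square_integrable_s_sq_f
  by (auto simp: \<gamma>_def less_Suc_eq numeral_eq_Suc)

lemma gram_\<gamma>:
  "gram \<gamma> 0 0 = sq_moment 2 f'" "gram \<gamma> 1 1 = sq_moment 0 f"
  "gram \<gamma> 2 2 = sq_moment 0 f''" "gram \<gamma> 3 3 = sq_moment 4 f"
  "gram \<gamma> 0 1 = - sq_moment 0 f / 2" "gram \<gamma> 1 0 = - sq_moment 0 f / 2"
  "gram \<gamma> 0 2 = - sq_moment 0 f' / 2" "gram \<gamma> 2 0 = - sq_moment 0 f' / 2"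
  "gram \<gamma> 0 3 = - 3 / 2 * sq_moment 2 f" "gram \<gamma> 3 0 = - 3 / 2 * sq_moment 2 f"
  "gram \<gamma> 1 2 = - sq_moment 0 f'" "gram \<gamma> 2 1 = - sq_moment 0 f'"
  "gram \<gamma> 1 3 = sq_moment 2 f" "gram \<gamma> 3 1 = sq_moment 2 f"
  "gram \<gamma> 2 3 = sq_moment 0 f - sq_moment 2 f'" "gram \<gamma> 3 2 = sq_moment 0 f - sq_moment 2 f'"
  using integral_s_f'_f integral_s_f'_f'' integral_s_f'_s_sq_f integral_f_f'' integral_f''_s_sq_f
  by (simp_all add: gram_def \<gamma>_def sq_moment_def eval_nat_numeral power2_eq_square mult_ac)

definition iterated_curl_energy :: real where
  "iterated_curl_energy = 6 * (sq_moment 2 f')\<^sup>2 - 6 * sq_moment 0 f * sq_moment 2 f'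
      + 5 / 2 * (sq_moment 0 f)\<^sup>2 + 2 * sq_moment 0 f'' * sq_moment 4 f
      - 10 * sq_moment 0 f' * sq_moment 2 f"

lemma nn_integral_iterated_curl_sq:
  "(\<integral>\<^sup>+x. ennreal ((grad (curl_field v (indicator {-a..a})) x \<bullet> rot x)\<^sup>2) \<partial>lborel) =
    ennreal iterated_curl_energy"
proof -
  have grad_curl: "grad (curl_field v (indicator {-a..a})) x = curl_grad x" for x
    by (rule grad_eqI[OF has_derivative_curl_field])
  have sum_4: "(\<Sum>k<4. F k) = F 0 + F 1 + F 2 + F 3" for F :: "nat \<Rightarrow> real"
    by (simp add: eval_nat_numeral)
  have "(\<integral>\<^sup>+x. ennreal ((grad (curl_field v (indicator {-a..a})) x \<bullet> rot x)\<^sup>2) \<partial>lborel) =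
      ennreal (\<Sum>l<4. \<Sum>l'<4. \<Sum>k<4. \<Sum>k'<4.
        curl_coeff k l * curl_coeff k' l' * gram \<gamma> k k' * gram \<gamma> l l')"
    unfolding grad_curl curl_grad_rot_eq
    by (rule nn_integral_separable_sum_square[OF square_integrable_\<gamma>])
  also have "\<dots> = ennreal iterated_curl_energy"
    unfolding sum_4 iterated_curl_energy_def
    \<comment> \<open>the simplifier presents the index 1 as \<open>Suc 0\<close>\<close>
    by (simp add: gram_\<gamma>[unfolded One_nat_def] curl_coeff_def power2_eq_square algebra_simps)
  finally show ?thesis .
qed

lemma sq_moment_0_f_le: "sq_moment 0 f \<le> 4 * a\<^sup>2 * gauss_sq_integral v"
  unfolding sq_moment_def using nn_integral_f_sq_le gauss_sq_integral_pos[OF v_pos]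
  by (auto intro!: integral_le_if_nn_integral_le)

lemma sq_moment_4_f_le:
  "sq_moment 4 f \<le> 2 * a * gauss_sq_integral v * (2 * a ^ 5 / 5 + 2 * v * a ^ 3 + 3 / 2 * v\<^sup>2 * a)"
  unfolding sq_moment_def using nn_integral_s4_f_sq_le gauss_sq_integral_pos[OF v_pos] a_pos v_pos
  by (auto intro!: integral_le_if_nn_integral_le)

lemma v_minus_exp_mult_v_le: "v - exp (- (a\<^sup>2) / v) * v \<le> a\<^sup>2"
  using exp_ge_add_one_self[of "- (a\<^sup>2) / v"] v_pos by (simp add: field_simps)

lemma sq_moment_2_f'_le: "sq_moment 2 f' \<le> 3 * a\<^sup>2 * gauss_sq_integral v"
  using has_bochner_integral_integral_eq[OF has_bochner_integral_s_sq_f'_sq] v_minus_exp_mult_v_le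
    gauss_sq_integral_pos[OF v_pos]
  by (simp add: sq_moment_def mult_left_mono)

lemma sq_moment_0_f''_le: "sq_moment 0 f'' \<le> 3 * a\<^sup>2 * gauss_sq_integral v / v\<^sup>2"
proof -
  have "exp (- (a\<^sup>2) / v) * a\<^sup>2 \<le> a\<^sup>2"
    using mult_right_mono[of "exp (- (a\<^sup>2) / v)" 1 "a\<^sup>2"] v_pos by simp
  then show ?thesis
    using has_bochner_integral_integral_eq[OF has_bochner_integral_f''_sq] v_minus_exp_mult_v_le
      gauss_sq_integral_pos[OF v_pos] v_pos
    by (simp add: sq_moment_def divide_right_mono mult_left_mono)
qed

lemma sq_moment_0_f''_le_uniform: "sq_moment 0 f'' \<le> 2 * gauss_sq_integral v / v"
proof -
  have "2 * exp (- (a\<^sup>2) / v) * a\<^sup>2 \<le> v"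
    using mult_exp_neg_le_half[of "a\<^sup>2 / v"] v_pos by (simp add: field_simps)
  moreover have "0 \<le> exp (- (a\<^sup>2) / v) * v"
    using v_pos by simp
  ultimately have "v - exp (- (a\<^sup>2) / v) * v + 2 * exp (- (a\<^sup>2) / v) * a\<^sup>2 \<le> 2 * v"
    by linarith
  then have "gauss_sq_integral v / v\<^sup>2 * (v - exp (- (a\<^sup>2) / v) * v + 2 * exp (- (a\<^sup>2) / v) * a\<^sup>2)
      \<le> gauss_sq_integral v / v\<^sup>2 * (2 * v)"
    using gauss_sq_integral_pos[OF v_pos] v_pos by (intro mult_left_mono) auto
  then show ?thesis
    using has_bochner_integral_integral_eq[OF has_bochner_integral_f''_sq] v_pos
    by (simp add: sq_moment_def power2_eq_square mult.commute)
qed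

lemma iterated_curl_energy_le_of_sq_moment_f''_le:
  assumes "sq_moment 0 f'' \<le> S"
  shows "iterated_curl_energy \<le> (gauss_sq_integral v)\<^sup>2 * 94 * a ^ 4
    + 4 * a * gauss_sq_integral v * S * (2 * a ^ 5 / 5 + 2 * v * a ^ 3 + 3 / 2 * v\<^sup>2 * a)"
proof -
  let ?c = "gauss_sq_integral v"
  have "0 \<le> sq_moment 0 f * sq_moment 2 f'" "0 \<le> sq_moment 0 f' * sq_moment 2 f"
    by (simp_all add: sq_moment_nonneg)
  then have "iterated_curl_energy \<le>
      6 * (sq_moment 2 f')\<^sup>2 + 5 / 2 * (sq_moment 0 f)\<^sup>2 + 2 * sq_moment 0 f'' * sq_moment 4 f"
    unfolding iterated_curl_energy_def by linarith
  also have "\<dots> \<le> 6 * (3 * a\<^sup>2 * ?c)\<^sup>2 + 5 / 2 * (4 * a\<^sup>2 * ?c)\<^sup>2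
      + 2 * S * (2 * a * ?c * (2 * a ^ 5 / 5 + 2 * v * a ^ 3 + 3 / 2 * v\<^sup>2 * a))"
    using assms sq_moment_2_f'_le sq_moment_0_f_le sq_moment_4_f_le
      sq_moment_nonneg[of 2 f'] sq_moment_nonneg[of 0 f] sq_moment_nonneg[of 0 f'']
      sq_moment_nonneg[of 4 f]
    by (intro add_mono mult_left_mono mult_mono power_mono) auto
  finally show ?thesis
    by (simp add: power2_eq_square eval_nat_numeral algebra_simps)
qed

lemma iterated_curl_energy_le:
  "iterated_curl_energy \<le> 28 * a ^ 4 / (pi * v) + 3 * a ^ 6 * (20 * v + 4 * a\<^sup>2) / (10 * pi * v ^ 3)"
proof -
  let ?c = "gauss_sq_integral v"
  have "iterated_curl_energy \<le> ?c\<^sup>2 * 94 * a ^ 4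
      + 4 * a * ?c * (3 * a\<^sup>2 * ?c / v\<^sup>2) * (2 * a ^ 5 / 5 + 2 * v * a ^ 3 + 3 / 2 * v\<^sup>2 * a)"
    by (rule iterated_curl_energy_le_of_sq_moment_f''_le[OF sq_moment_0_f''_le])
  also have "\<dots> = ?c\<^sup>2 *
      (94 * a ^ 4 + 12 * a ^ 3 / v\<^sup>2 * (2 * a ^ 5 / 5 + 2 * v * a ^ 3 + 3 / 2 * v\<^sup>2 * a))"
    by (simp add: power2_eq_square eval_nat_numeral algebra_simps)
  also have "\<dots> = 28 * a ^ 4 / (pi * v) + 3 * a ^ 6 * (20 * v + 4 * a\<^sup>2) / (10 * pi * v ^ 3)"
    unfolding gauss_sq_integral_sq[OF v_pos] using v_pos
    by (simp add: power2_eq_square field_simps eval_nat_numeral)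
  finally show ?thesis .
qed

lemma iterated_curl_energy_le_if_a_sq_le_1:
  assumes "a\<^sup>2 \<le> 1"
  shows "iterated_curl_energy \<le> 3 / pi + 55 / (pi * v) + 4 / (5 * pi * v\<^sup>2)"
proof -
  let ?c = "gauss_sq_integral v"
  have "iterated_curl_energy \<le> ?c\<^sup>2 * 94 * a ^ 4
      + 4 * a * ?c * (2 * ?c / v) * (2 * a ^ 5 / 5 + 2 * v * a ^ 3 + 3 / 2 * v\<^sup>2 * a)"
    by (rule iterated_curl_energy_le_of_sq_moment_f''_le[OF sq_moment_0_f''_le_uniform])
  also have "\<dots> = ?c\<^sup>2 *
      (94 * a ^ 4 + 8 * a / v * (2 * a ^ 5 / 5 + 2 * v * a ^ 3 + 3 / 2 * v\<^sup>2 * a))"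
    by (simp add: power2_eq_square eval_nat_numeral algebra_simps)
  also have "\<dots> = 3 * a\<^sup>2 / pi + 55 / 2 * (a\<^sup>2)\<^sup>2 / (pi * v) + 4 / 5 * (a\<^sup>2) ^ 3 / (pi * v\<^sup>2)"
    unfolding gauss_sq_integral_sq[OF v_pos] using v_pos
    by (simp add: power2_eq_square field_simps eval_nat_numeral)
  also have "\<dots> \<le> 3 * 1 / pi + 55 / 2 * 1 / (pi * v) + 4 / 5 * 1 / (pi * v\<^sup>2)"
    using assms v_pos power_le_one[OF zero_le_power2 assms, of 2]
      power_le_one[OF zero_le_power2 assms, of 3]
    by (intro add_mono divide_right_mono mult_left_mono) auto
  also have "\<dots> \<le> 3 / pi + 55 / (pi * v) + 4 / (5 * pi * v\<^sup>2)"
    using v_pos by (simp add: field_simps)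
  finally show ?thesis .
qed

end

theorem mainTheorem15:
  fixes \<alpha> \<sigma> :: real and u f :: "real \<Rightarrow> real"
  assumes "\<alpha> > 0" and "\<sigma> > 0"
    and "u = indicator {-\<alpha>..\<alpha>}"
    and "f = (\<lambda>s. LINT x:{-\<alpha>..\<alpha>}|lborel. gauss (\<sigma>^2) (s - x))"
  shows "(\<forall>s t. (curl_field (\<sigma>^2) u has_derivative
            (\<lambda>h. (s * deriv f s * deriv f t + f s * deriv f t - t * f t * deriv (deriv f) s,
                   s * f s * deriv (deriv f) t - f t * deriv f s - t * deriv f s * deriv f t) \<bullet> h))
            (at (s, t)))
     \<and> (\<integral>\<^sup>+ x. ennreal ((grad (curl_field (\<sigma>^2) u) x \<bullet> rot x) ^ 2) \<partial>lborel)
         \<le> ennreal (28 * \<alpha>^4 / (pi * \<sigma>^2)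
                    + 3 * \<alpha>^6 * (20 * \<sigma>^2 + 4 * \<alpha>^2) / (10 * pi * \<sigma>^6))
     \<and> (\<alpha>^2 \<le> 1 \<longrightarrow>
         (\<integral>\<^sup>+ x. ennreal ((grad (curl_field (\<sigma>^2) u) x \<bullet> rot x) ^ 2) \<partial>lborel)
           \<le> ennreal (3 / pi + 55 / (pi * \<sigma>^2) + 4 / (5 * pi * \<sigma>^4)))"
proof -
  interpret B: smoothed_box "\<sigma>^2" \<alpha>
    using assms(1,2) by unfold_locales auto
  have f: "f = B.f"
    using assms(4) by (simp add: B.f_def[abs_def])
  have deriv: "(curl_field (\<sigma>^2) u has_derivative (\<lambda>h. B.curl_grad (s, t) \<bullet> h)) (at (s, t))"
    for s t
    unfolding assms(3) by (rule B.has_derivative_curl_field)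
  have energy: "(\<integral>\<^sup>+ x. ennreal ((grad (curl_field (\<sigma>^2) u) x \<bullet> rot x) ^ 2) \<partial>lborel) =
      ennreal B.iterated_curl_energy"
    unfolding assms(3) by (rule B.nn_integral_iterated_curl_sq)
  have powers: "\<sigma> ^ 4 = (\<sigma>^2)\<^sup>2" "\<sigma> ^ 6 = (\<sigma>^2) ^ 3"
    by (simp_all flip: power_mult)
  show ?thesis
    unfolding energy powers f B.deriv_f B.deriv_f'
    by (intro conjI impI allI ennreal_leI deriv[unfolded B.curl_grad_def prod.case]
        B.iterated_curl_energy_le B.iterated_curl_energy_le_if_a_sq_le_1)
qed

end
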